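(* Let $(N,J,h)$ be a 2-dimensional almost Norden manifold of constant sectional curvature $k'$ and let $(S^1(N),\varphi,\xi,\eta,g)$ be its $S^1$-solvable extension (constructed as in the context). If $(N,J,h)$ is a K\"ahler-Norden manifold, then \[ \tau=2(k'\cos2t+1),\qquad \tau^{**}=2(k'\cos2t-1). \]
   Context: An almost Norden manifold $(N,J,h)$ is a manifold $N$ with an almost complex structure $J$ and a pseudo-Riemannian metric $h$ satisfying $h(Jx,Jy)=-h(x,y)$; $\widetilde{h}(x,y)=h(x,Jy)$; it is K\"ahler-Norden if $\nabla'J=0$ for its Levi-Civita connection $\nabla'$; constant sectional curvature $k'$ means its curvature tensor is $R'(x,y,z,w)=k'\{h(y,z)h(x,w)-h(x,z)h(y,w)\}$. The $S^1$-solvable extension is $S^1(N)=\mathbb{R}^+\times N$, $t$ the coordinate on $\mathbb{R}^+=(0,\infty)$, with $\xi=\tfrac{\mathrm{d}}{\mathrm{d}t}$, $\eta=\mathrm{d}t$, $\varphi=J$ on vectors tangent to $N$, $\varphi\xi=0$, and metric $g=\mathrm{d}t^2+\cos2t\,h-\sin2t\,\widetilde{h}$. With $\nabla$ the Levi-Civita connection of $g$, $R(x,y)=\nabla_x\nabla_y-\nabla_y\nabla_x-\nabla_{[x,y]}$, $R(x,y,z,w)=g(R(x,y)z,w)$, and for a basis $\{e_i\}$ with $(g^{ij})$ the inverse of $(g(e_i,e_j))$ (summation convention): $\rho(y,z)=g^{ij}R(e_i,y,z,e_j)$, $\rho^*(y,z)=g^{ij}R(e_i,y,z,\varphi e_j)$,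 $\tau=g^{ij}\rho(e_i,e_j)$, $\tau^{**}=g^{ij}\rho^*(e_i,\varphi e_j)$. *)

theory Defs
  imports "HOL-Analysis.Analysis"
begin

text \<open>A manifold of dimension n is modelled by an open
  coordinate domain U of a Euclidean space 'a with DIM('a) = n; tensor fields are
  given pointwise on U (p is the point, the remaining arguments are tangent vectors,
  tangent spaces being identified with 'a).  Coordinate fields are the constant
  vector fields; Basis is the coordinate basis.\<close>

fun Ck :: "nat \<Rightarrow> 'a::euclidean_space set \<Rightarrow> ('a \<Rightarrow> real) \<Rightarrow> bool" where
  "Ck 0 U f = continuous_on U f"
| "Ck (Suc k) U f = (f differentiable_on U \<and>
      (\<forall>e\<in>Basis. Ck k U (\<lambda>p. frechet_derivative f (at p) e)))"

definition smooth_fun_on :: "'a::euclidean_space set \<Rightarrow> ('a \<Rightarrow> real) \<Rightarrow> bool" where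
  "smooth_fun_on U f \<longleftrightarrow> (\<forall>k. Ck k U f)"

text \<open>Christoffel map of a metric g (Koszul formula for coordinate fields):
  g(Gamma(x,y), z) = (x(g(y,z)) + y(g(x,z)) - z(g(x,y)))/2.\<close>
definition christ :: "('a::euclidean_space \<Rightarrow> 'a \<Rightarrow> 'a \<Rightarrow> real) \<Rightarrow> 'a \<Rightarrow> 'a \<Rightarrow> 'a \<Rightarrow> 'a" where
  "christ g p x y = (THE v. \<forall>z. g p v z =
     (frechet_derivative (\<lambda>q. g q y z) (at p) x
      + frechet_derivative (\<lambda>q. g q x z) (at p) y
      - frechet_derivative (\<lambda>q. g q x y) (at p) z) / 2)"

definition lc_cov :: "('a::euclidean_space \<Rightarrow> 'a \<Rightarrow> 'a \<Rightarrow> real) \<Rightarrow> ('a \<Rightarrow> 'a) \<Rightarrow> ('a \<Rightarrow> 'a) \<Rightarrow> 'a \<Rightarrow> 'a" where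
  "lc_cov g X Y p = frechet_derivative Y (at p) (X p) + christ g p (X p) (Y p)"

definition lie :: "('a::euclidean_space \<Rightarrow> 'a) \<Rightarrow> ('a \<Rightarrow> 'a) \<Rightarrow> 'a \<Rightarrow> 'a" where
  "lie X Y p = frechet_derivative Y (at p) (X p) - frechet_derivative X (at p) (Y p)"

definition curv_op :: "('a::euclidean_space \<Rightarrow> 'a \<Rightarrow> 'a \<Rightarrow> real) \<Rightarrow> ('a \<Rightarrow> 'a) \<Rightarrow> ('a \<Rightarrow> 'a) \<Rightarrow> ('a \<Rightarrow> 'a) \<Rightarrow> 'a \<Rightarrow> 'a" where
  "curv_op g X Y Z p = lc_cov g X (lc_cov g Y Z) p - lc_cov g Y (lc_cov g X Z) p - lc_cov g (lie X Y) Z p"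

text \<open>Curvature tensor R(x,y,z,w) = g(R(x,y)z, w) at p (tensor evaluated via
  coordinate (constant) extensions of the tangent vectors).\<close>
definition curv :: "('a::euclidean_space \<Rightarrow> 'a \<Rightarrow> 'a \<Rightarrow> real) \<Rightarrow> 'a \<Rightarrow> 'a \<Rightarrow> 'a \<Rightarrow> 'a \<Rightarrow> 'a \<Rightarrow> real" where
  "curv g p x y z w = g p (curv_op g (\<lambda>_. x) (\<lambda>_. y) (\<lambda>_. z) p) w"

definition gram_inv :: "('a::euclidean_space \<Rightarrow> 'a \<Rightarrow> 'a \<Rightarrow> real) \<Rightarrow> 'a \<Rightarrow> 'a \<Rightarrow> 'a \<Rightarrow> real" where
  "gram_inv g p = (THE G. (\<forall>i\<in>Basis. \<forall>j\<in>Basis.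
       (\<Sum>k\<in>Basis. G i k * g p k j) = (if i = j then 1 else 0))
     \<and> (\<forall>i j. i \<notin> Basis \<or> j \<notin> Basis \<longrightarrow> G i j = 0))"

definition mtrace :: "('a::euclidean_space \<Rightarrow> 'a \<Rightarrow> 'a \<Rightarrow> real) \<Rightarrow> 'a \<Rightarrow> ('a \<Rightarrow> 'a \<Rightarrow> real) \<Rightarrow> real" where
  "mtrace g p B = (\<Sum>i\<in>Basis. \<Sum>j\<in>Basis. gram_inv g p i j * B i j)"

definition ricci :: "('a::euclidean_space \<Rightarrow> 'a \<Rightarrow> 'a \<Rightarrow> real) \<Rightarrow> 'a \<Rightarrow> 'a \<Rightarrow> 'a \<Rightarrow> real" where
  "ricci g p y z = mtrace g p (\<lambda>i j. curv g p i y z j)"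

definition scal :: "('a::euclidean_space \<Rightarrow> 'a \<Rightarrow> 'a \<Rightarrow> real) \<Rightarrow> 'a \<Rightarrow> real" where
  "scal g p = mtrace g p (\<lambda>i j. ricci g p i j)"

definition ricci_star :: "('a::euclidean_space \<Rightarrow> 'a \<Rightarrow> 'a \<Rightarrow> real) \<Rightarrow> ('a \<Rightarrow> 'a \<Rightarrow> 'a) \<Rightarrow> 'a \<Rightarrow> 'a \<Rightarrow> 'a \<Rightarrow> real" where
  "ricci_star g phi p y z = mtrace g p (\<lambda>i j. curv g p i y z (phi p j))"

definition tau_ss :: "('a::euclidean_space \<Rightarrow> 'a \<Rightarrow> 'a \<Rightarrow> real) \<Rightarrow> ('a \<Rightarrow> 'a \<Rightarrow> 'a) \<Rightarrow> 'a \<Rightarrow> real" where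
  "tau_ss g phi p = mtrace g p (\<lambda>i j. ricci_star g phi p i (phi p j))"

definition almost_norden :: "'a::euclidean_space set \<Rightarrow> ('a \<Rightarrow> 'a \<Rightarrow> 'a \<Rightarrow> real) \<Rightarrow> ('a \<Rightarrow> 'a \<Rightarrow> 'a) \<Rightarrow> bool" where
  "almost_norden U h J \<longleftrightarrow> open U \<and>
     (\<forall>p\<in>U. bilinear (h p) \<and> (\<forall>x y. h p x y = h p y x)
        \<and> (\<forall>x. (\<forall>y. h p x y = 0) \<longrightarrow> x = 0)
        \<and> linear (J p) \<and> (\<forall>x. J p (J p x) = - x)
        \<and> (\<forall>x y. h p (J p x) (J p y) = - h p x y))
     \<and> (\<forall>x y. smooth_fun_on U (\<lambda>p. h p x y))
     \<and> (\<forall>x y. smooth_fun_on U (\<lambda>p. J p x \<bullet> y))"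

definition kaehler_norden :: "'a::euclidean_space set \<Rightarrow> ('a \<Rightarrow> 'a \<Rightarrow> 'a \<Rightarrow> real) \<Rightarrow> ('a \<Rightarrow> 'a \<Rightarrow> 'a) \<Rightarrow> bool" where
  "kaehler_norden U h J \<longleftrightarrow> almost_norden U h J \<and>
     (\<forall>p\<in>U. \<forall>x y. lc_cov h (\<lambda>_. x) (\<lambda>q. J q y) p - J p (lc_cov h (\<lambda>_. x) (\<lambda>_. y) p) = 0)"

definition const_sec_curv :: "'a::euclidean_space set \<Rightarrow> ('a \<Rightarrow> 'a \<Rightarrow> 'a \<Rightarrow> real) \<Rightarrow> real \<Rightarrow> bool" where
  "const_sec_curv U h k \<longleftrightarrow> (\<forall>p\<in>U. \<forall>x y z w.
     curv h p x y z w = k * (h p y z * h p x w - h p x z * h p y w))"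

text \<open>S^1-solvable extension on R^+ \<times> U, points (t,p), tangent vectors (s,x) = s d/dt + x.\<close>
definition s1_metric :: "('a::euclidean_space \<Rightarrow> 'a \<Rightarrow> 'a \<Rightarrow> real) \<Rightarrow> ('a \<Rightarrow> 'a \<Rightarrow> 'a)
    \<Rightarrow> real \<times> 'a \<Rightarrow> real \<times> 'a \<Rightarrow> real \<times> 'a \<Rightarrow> real" where
  "s1_metric h J P X Y = fst X * fst Y
     + cos (2 * fst P) * h (snd P) (snd X) (snd Y)
     - sin (2 * fst P) * h (snd P) (snd X) (J (snd P) (snd Y))"

definition s1_phi :: "('a::euclidean_space \<Rightarrow> 'a \<Rightarrow> 'a) \<Rightarrow> real \<times> 'a \<Rightarrow> real \<times> 'a \<Rightarrow> real \<times> 'a" where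
  "s1_phi J P X = (0, J (snd P) (snd X))"

definition s1_xi :: "real \<times> 'a::euclidean_space" where "s1_xi = (1, 0)"
definition s1_eta :: "real \<times> 'a::euclidean_space \<Rightarrow> real" where "s1_eta X = fst X"

end

theory Submission
  imports Defs
begin

text \<open>
  The Levi-Civita connection of g = dt^2 + cos 2t h - sin 2t h~ (where h~(x,y) = h(x,Jy)) is
  explicit: its N-part is the connection of h, \<nabla>_\<xi> \<xi> = 0, \<nabla>_\<xi> y = \<nabla>_y \<xi> = -\<phi> y, and the
  \<xi>-part of \<nabla>_x y is sin 2t h(x,y) + cos 2t h~(x,y); the Kaehler condition makes h~ parallel,
  which is what this verification needs. Hence the curvature of g is expressed through that of h:
  on vectors tangent to N it is k' times the Gauss form twisted by cos 2t + sin 2t J, minus the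
  Gauss form twisted by J, and R(x,\<xi>,\<xi>,y) = g(x,y). Contracting over the two N-directions,
  where tr J = 0, gives \<rho>(\<xi>,\<xi>) = 2, \<rho>(x,y) = k' g(x, cos 2t y + sin 2t Jy) and
  \<rho>*(x,Jy) = \<rho>(x,y) - g(x,y); one more trace yields \<tau> and \<tau>**.
\<close>

lemma linear_sum_Basis:
  fixes f :: "'a::euclidean_space \<Rightarrow> 'b::real_vector"
  assumes "linear f"
  shows "(\<Sum>b\<in>Basis. (x \<bullet> b) *\<^sub>R f b) = f x"
proof -
  have "f (\<Sum>b\<in>Basis. (x \<bullet> b) *\<^sub>R b) = (\<Sum>b\<in>Basis. (x \<bullet> b) *\<^sub>R f b)"
    using assms by (simp add: linear_sum linear_scale)
  then show ?thesis by (simp add: euclidean_representation)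
qed

lemma frechet_derivative_cong_open:
  assumes "open S" "x \<in> S" "\<And>y. y \<in> S \<Longrightarrow> f y = g y"
  shows "frechet_derivative f (at x) = frechet_derivative g (at x)"
proof -
  have "(f has_derivative D) (at x) \<longleftrightarrow> (g has_derivative D) (at x)" for D
    using assms has_derivative_transform_within_open[of f D x UNIV S g]
      has_derivative_transform_within_open[of g D x UNIV S f] by auto
  then show ?thesis unfolding frechet_derivative_def by simp
qed

lemma differentiable_transform_open:
  assumes "f differentiable (at x)" "open S" "x \<in> S" "\<And>y. y \<in> S \<Longrightarrow> f y = g y"
  shows "g differentiable (at x)"
  using assms has_derivative_transform_within_open unfolding differentiable_def by blast

lemma smooth_fun_on_differentiable:
  assumes "smooth_fun_on U f" "open U" "q \<in> U"
  shows "f differentiable (at q)"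
proof -
  have "Ck 1 U f" using assms(1) unfolding smooth_fun_on_def by blast
  then show ?thesis using assms(2,3) differentiable_on_eq_differentiable_at by auto
qed

lemma smooth_fun_on_derivative_differentiable:
  assumes sm: "smooth_fun_on U f" and U: "open U" and q: "q \<in> U"
  shows "(\<lambda>p. frechet_derivative f (at p) v) differentiable (at q)"
proof (rule differentiable_transform_open[OF _ U q])
  have "Ck 2 U f" using sm unfolding smooth_fun_on_def by blast
  then have "(\<lambda>p. frechet_derivative f (at p) b) differentiable (at q)" if "b \<in> Basis" for b
    using that U q differentiable_on_eq_differentiable_at by (auto simp: numeral_2_eq_2)
  then show "(\<lambda>p. \<Sum>b\<in>Basis. (v \<bullet> b) * frechet_derivative f (at p) b) differentiable (at q)"
    by (intro differentiable_sum differentiable_mult differentiable_const) auto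
  show "(\<Sum>b\<in>Basis. (v \<bullet> b) * frechet_derivative f (at p) b) = frechet_derivative f (at p) v"
    if "p \<in> U" for p
    using linear_sum_Basis[OF linear_frechet_derivative[OF smooth_fun_on_differentiable[OF sm U that]]]
    by simp
qed

lemma differentiable_componentwise:
  fixes F :: "'a::real_normed_vector \<Rightarrow> 'b::euclidean_space"
  assumes "\<And>b. b \<in> Basis \<Longrightarrow> (\<lambda>q. F q \<bullet> b) differentiable (at p)"
  shows "F differentiable (at p)"
proof -
  have "(\<lambda>q. \<Sum>b\<in>Basis. (F q \<bullet> b) *\<^sub>R b) differentiable (at p)"
    using assms by (intro differentiable_sum differentiable_scaleR differentiable_const) auto
  then show ?thesis by (simp add: euclidean_representation)
qed

lemma sum_Basis_prod:
  fixes f :: "('a::euclidean_space \<times> 'b::euclidean_space) \<Rightarrow> real"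
  shows "sum f Basis = (\<Sum>i\<in>Basis. f (i, 0)) + (\<Sum>i\<in>Basis. f (0, i))"
proof -
  have "inj_on (\<lambda>u. (u::'a, 0::'b)) Basis" "inj_on (\<lambda>u. (0::'a, u::'b)) Basis"
    by (auto intro!: inj_onI)
  then show ?thesis
    unfolding Basis_prod_def by (subst sum.union_disjoint) (auto simp: sum.reindex)
qed

lemma sum_Basis_real_prod:
  fixes f :: "(real \<times> 'b::euclidean_space) \<Rightarrow> real"
  shows "sum f Basis = f (1, 0) + (\<Sum>i\<in>Basis. f (0, i))"
  by (simp add: sum_Basis_prod)

lemma Basis_real_prod_cases:
  assumes "(I :: real \<times> 'a::euclidean_space) \<in> Basis"
  obtains "I = (1, 0)" | b where "I = (0, b)" "b \<in> Basis"
  using assms unfolding Basis_prod_def by auto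

lemma curv_op_const_fields:
  "curv_op G (\<lambda>_. X) (\<lambda>_. Y) (\<lambda>_. Z) P =
     frechet_derivative (\<lambda>Q. christ G Q Y Z) (at P) X + christ G P X (christ G P Y Z)
     - frechet_derivative (\<lambda>Q. christ G Q X Z) (at P) Y - christ G P Y (christ G P X Z)
     - christ G P 0 Z"
  unfolding curv_op_def lc_cov_def lie_def by simp

section \<open>Contractions with an inverse Gram matrix\<close>

definition lin_trace :: "('a::euclidean_space \<Rightarrow> 'a) \<Rightarrow> real" where
  "lin_trace M = (\<Sum>b\<in>Basis. M b \<bullet> b)"

lemma lin_trace_id [simp]: "lin_trace (\<lambda>u::'a::euclidean_space. u) = DIM('a)"
  by (simp add: lin_trace_def)

lemma lin_trace_uminus [simp]: "lin_trace (uminus :: 'a::euclidean_space \<Rightarrow> 'a) = - DIM('a)"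
  by (simp add: lin_trace_def sum_negf)

lemma lin_trace_add [simp]: "lin_trace (\<lambda>u. M u + N u) = lin_trace M + lin_trace N"
  by (simp add: lin_trace_def inner_add_left sum.distrib)

lemma lin_trace_diff [simp]: "lin_trace (\<lambda>u. M u - N u) = lin_trace M - lin_trace N"
  by (simp add: lin_trace_def inner_diff_left sum_subtractf)

lemma lin_trace_scale [simp]: "lin_trace (\<lambda>u. a *\<^sub>R M u) = a * lin_trace M"
  by (simp add: lin_trace_def sum_distrib_left)

definition dual_vector :: "('a::euclidean_space \<Rightarrow> 'a \<Rightarrow> real) \<Rightarrow> ('a \<Rightarrow> real) \<Rightarrow> 'a" where
  "dual_vector G f = (\<Sum>i\<in>Basis. (\<Sum>j\<in>Basis. G i j * f j) *\<^sub>R i)"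

locale gram_inverse =
  fixes B G :: "'a::euclidean_space \<Rightarrow> 'a \<Rightarrow> real"
  assumes bilinear: "bilinear B"
    and symmetric: "\<And>i j. G i j = G j i"
    and left_inverse: "\<And>i j. i \<in> Basis \<Longrightarrow> j \<in> Basis \<Longrightarrow> (\<Sum>k\<in>Basis. G i k * B k j) = (if i = j then 1 else 0)"
begin

lemma linear_left: "linear (\<lambda>x. B x w)" and linear_right: "linear (B a)"
  using bilinear by (simp_all add: bilinear_def)

lemma contract:
  assumes "i \<in> Basis"
  shows "(\<Sum>a\<in>Basis. G a i * B a v) = v \<bullet> i"
proof -
  have "B a v = (\<Sum>j\<in>Basis. (v \<bullet> j) * B a j)" for a
    using linear_sum_Basis[OF linear_right, of v a] by simp
  then have "(\<Sum>a\<in>Basis. G a i * B a v) = (\<Sum>a\<in>Basis. \<Sum>j\<in>Basis. (v \<bullet> j) * (G i a * B a j))"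
    by (simp add: sum_distrib_left symmetric[of _ i] ac_simps)
  also have "\<dots> = (\<Sum>j\<in>Basis. (v \<bullet> j) * (\<Sum>a\<in>Basis. G i a * B a j))"
    by (subst sum.swap) (simp add: sum_distrib_left)
  also have "\<dots> = v \<bullet> i"
    using assms by (simp add: left_inverse if_distrib sum.delta cong: if_cong)
  finally show ?thesis .
qed

lemma trace: "(\<Sum>a\<in>Basis. \<Sum>b\<in>Basis. G a b * B a (M b)) = lin_trace M"
  unfolding lin_trace_def by (subst sum.swap) (simp add: contract)

lemma contract_pair:
  assumes "linear N"
  shows "(\<Sum>c\<in>Basis. \<Sum>d\<in>Basis. G c d * (B c u * B a (N d))) = B a (N u)"
proof -
  have "(\<Sum>c\<in>Basis. \<Sum>d\<in>Basis. G c d * (B c u * B a (N d)))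
      = (\<Sum>d\<in>Basis. (\<Sum>c\<in>Basis. G c d * B c u) * B a (N d))"
    by (subst sum.swap) (simp add: sum_distrib_left sum_distrib_right ac_simps)
  also have "\<dots> = B a (N u)"
    using linear_sum_Basis[OF linear_compose[OF assms linear_right], of u]
    by (simp add: contract o_def)
  finally show ?thesis .
qed

lemma contract_wedge:
  assumes "linear N"
  shows "(\<Sum>c\<in>Basis. \<Sum>d\<in>Basis. G c d * (B a u * B c (N d) - B c u * B a (N d)))
    = B a u * lin_trace N - B a (N u)"
proof -
  have "(\<Sum>c\<in>Basis. \<Sum>d\<in>Basis. G c d * (B a u * B c (N d))) = B a u * lin_trace N"
    by (simp add: trace[symmetric] sum_distrib_left ac_simps)
  then show ?thesis
    using contract_pair[OF assms] by (simp add: right_diff_distrib sum_subtractf)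
qed

lemma contract_curvature:
  assumes "linear N" "linear N'"
  shows "(\<Sum>c\<in>Basis. \<Sum>d\<in>Basis. G c d *
      (k * (B a u * B c (N d) - B c u * B a (N d)) - (B a v * B c (N' d) - B c v * B a (N' d))))
    = k * (B a u * lin_trace N - B a (N u)) - (B a v * lin_trace N' - B a (N' v))"
proof -
  have "G c d * (k * X - Y) = k * (G c d * X) - G c d * Y" for c d and X Y :: real
    by (simp add: algebra_simps)
  then have "(\<Sum>c\<in>Basis. \<Sum>d\<in>Basis. G c d *
      (k * (B a u * B c (N d) - B c u * B a (N d)) - (B a v * B c (N' d) - B c v * B a (N' d))))
    = k * (\<Sum>c\<in>Basis. \<Sum>d\<in>Basis. G c d * (B a u * B c (N d) - B c u * B a (N d)))
      - (\<Sum>c\<in>Basis. \<Sum>d\<in>Basis. G c d * (B a v * B c (N' d) - B c v * B a (N' d)))"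
    by (simp only: sum_subtractf sum_distrib_left)
  then show ?thesis by (simp add: contract_wedge assms)
qed

lemma dual_vector_represents:
  assumes "linear f"
  shows "B (dual_vector G f) w = f w"
proof -
  have "B (dual_vector G f) w = (\<Sum>i\<in>Basis. \<Sum>j\<in>Basis. G i j * f j * B i w)"
    unfolding dual_vector_def
    by (simp add: linear_sum[OF linear_left] linear_scale[OF linear_left] sum_distrib_right)
  also have "\<dots> = (\<Sum>j\<in>Basis. f j * (\<Sum>i\<in>Basis. G i j * B i w))"
    by (subst sum.swap) (simp add: sum_distrib_left ac_simps)
  also have "\<dots> = (\<Sum>j\<in>Basis. f j * (w \<bullet> j))"
    by (simp add: contract)
  also have "\<dots> = f w"
    using linear_sum_Basis[OF assms, of w] by (simp add: mult.commute)
  finally show ?thesis .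
qed

end

lemma gram_invI:
  fixes G :: "'a::euclidean_space \<Rightarrow> 'a \<Rightarrow> 'a \<Rightarrow> real"
  assumes left: "\<And>i j. i \<in> Basis \<Longrightarrow> j \<in> Basis \<Longrightarrow> (\<Sum>k\<in>Basis. M i k * G P k j) = (if i = j then 1 else 0)"
    and right: "\<And>i j. i \<in> Basis \<Longrightarrow> j \<in> Basis \<Longrightarrow> (\<Sum>k\<in>Basis. G P i k * M k j) = (if i = j then 1 else 0)"
    and outside: "\<And>i j. i \<notin> Basis \<or> j \<notin> Basis \<Longrightarrow> M i j = 0"
  shows "gram_inv G P = M"
  unfolding gram_inv_def
proof (rule the_equality)
  show "(\<forall>i\<in>Basis. \<forall>j\<in>Basis. (\<Sum>k\<in>Basis. M i k * G P k j) = (if i = j then 1 else 0))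
      \<and> (\<forall>i j. i \<notin> Basis \<or> j \<notin> Basis \<longrightarrow> M i j = 0)"
    using left outside by blast
  fix N assume "(\<forall>i\<in>Basis. \<forall>j\<in>Basis. (\<Sum>k\<in>Basis. N i k * G P k j) = (if i = j then 1 else 0))
      \<and> (\<forall>i j. i \<notin> Basis \<or> j \<notin> Basis \<longrightarrow> N i j = 0)"
  then have N_left: "\<And>i j. i \<in> Basis \<Longrightarrow> j \<in> Basis \<Longrightarrow> (\<Sum>k\<in>Basis. N i k * G P k j) = (if i = j then 1 else 0)"
    and N_outside: "\<And>i j. i \<notin> Basis \<or> j \<notin> Basis \<Longrightarrow> N i j = 0"
    by blast+
  have "N i j = M i j" if i: "i \<in> Basis" and j: "j \<in> Basis" for i j
  proof -
    \<comment> \<open>a left inverse equals a right inverse: N = N (G M) = (N G) M = M\<close>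
    have "N i j = (\<Sum>l\<in>Basis. if l = j then N i l else 0)"
      using j by simp
    also have "\<dots> = (\<Sum>l\<in>Basis. N i l * (\<Sum>k\<in>Basis. G P l k * M k j))"
      using j by (intro sum.cong refl) (simp add: right)
    also have "\<dots> = (\<Sum>k\<in>Basis. (\<Sum>l\<in>Basis. N i l * G P l k) * M k j)"
      by (simp add: sum_distrib_left sum_distrib_right mult.assoc) (rule sum.swap)
    also have "\<dots> = (\<Sum>k\<in>Basis. if i = k then M k j else 0)"
      using i by (intro sum.cong refl) (simp add: N_left)
    also have "\<dots> = M i j"
      using i by simp
    finally show ?thesis .
  qed
  then show "N = M"
    using N_outside outside by (intro ext) (metis (full_types))
qed

section \<open>Two-dimensional spaces\<close>

locale basis2 =
  fixes e1 e2 :: "'a::euclidean_space"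
  assumes Basis_eq: "Basis = {e1, e2}" and basis_neq: "e1 \<noteq> e2"
begin

lemma sum_Basis: "sum f Basis = f e1 + f e2"
  using basis_neq by (simp add: Basis_eq)

lemma inner_basis [simp]: "e1 \<bullet> e1 = 1" "e2 \<bullet> e2 = 1" "e1 \<bullet> e2 = 0" "e2 \<bullet> e1 = 0"
  using basis_neq by (simp_all add: Basis_eq inner_Basis)

lemma DIM_eq_2: "DIM('a) = 2"
  using basis_neq by (simp add: Basis_eq)

lemma basis_expansion: "x = (x \<bullet> e1) *\<^sub>R e1 + (x \<bullet> e2) *\<^sub>R e2"
  using euclidean_representation[of x] by (simp add: sum_Basis)

lemma bilinear_expansion:
  assumes "bilinear B"
  shows "B x y = (x \<bullet> e1) * (y \<bullet> e1) * B e1 e1 + (x \<bullet> e1) * (y \<bullet> e2) * B e1 e2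
    + (x \<bullet> e2) * (y \<bullet> e1) * B e2 e1 + (x \<bullet> e2) * (y \<bullet> e2) * B e2 e2"
proof -
  have "B (a *\<^sub>R e1 + b *\<^sub>R e2) (c *\<^sub>R e1 + d *\<^sub>R e2) =
      a * c * B e1 e1 + a * d * B e1 e2 + b * c * B e2 e1 + b * d * B e2 e2" for a b c d
    using assms by (simp add: bilinear_ladd bilinear_radd bilinear_lmul bilinear_rmul algebra_simps)
  from this[of "x \<bullet> e1" "x \<bullet> e2" "y \<bullet> e1" "y \<bullet> e2"] show ?thesis
    by (simp only: basis_expansion[symmetric])
qed

definition det2 :: "('a \<Rightarrow> 'a \<Rightarrow> real) \<Rightarrow> real" where
  "det2 B = B e1 e1 * B e2 e2 - B e1 e2 * B e1 e2"

lemma det2_nonzero: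
  assumes B: "bilinear B" and sym: "\<And>x y. B x y = B y x"
    and nondeg: "\<And>x. (\<And>y. B x y = 0) \<Longrightarrow> x = 0"
  shows "det2 B \<noteq> 0"
proof
  assume det: "det2 B = 0"
  \<comment> \<open>the first row of the adjugate lies in the radical of B\<close>
  let ?v = "B e2 e2 *\<^sub>R e1 - B e1 e2 *\<^sub>R e2"
  have "B ?v y = 0" for y
    using det sym[of e2 e1] unfolding det2_def
    by (simp add: bilinear_expansion[OF B, of ?v y] algebra_simps inner_diff_left)
  then have "?v = 0" by (rule nondeg)
  then have "?v \<bullet> e1 = 0" "?v \<bullet> e2 = 0" by simp_all
  then have "B e2 e2 = 0" "B e1 e2 = 0" by (simp_all add: inner_diff_left)
  then have "B e2 y = 0" for y
    using sym[of e2 e1] by (simp add: bilinear_expansion[OF B, of e2 y])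
  then have "e2 = 0" by (rule nondeg)
  then show False using inner_basis(2) by simp
qed

definition gram_inv2 :: "('a \<Rightarrow> 'a \<Rightarrow> real) \<Rightarrow> 'a \<Rightarrow> 'a \<Rightarrow> real" where
  "gram_inv2 B i j =
    (if i = e1 \<and> j = e1 then B e2 e2 else if i = e2 \<and> j = e2 then B e1 e1
     else if i \<in> Basis \<and> j \<in> Basis then - B e1 e2 else 0) / det2 B"

lemma gram_inv2_inverse:
  assumes sym: "\<And>x y. B x y = B y x" and det: "det2 B \<noteq> 0"
  shows gram_inv2_left_inverse:
      "\<And>i j. i \<in> Basis \<Longrightarrow> j \<in> Basis \<Longrightarrow> (\<Sum>k\<in>Basis. gram_inv2 B i k * B k j) = (if i = j then 1 else 0)"
    and gram_inv2_right_inverse: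
      "\<And>i j. i \<in> Basis \<Longrightarrow> j \<in> Basis \<Longrightarrow> (\<Sum>k\<in>Basis. B i k * gram_inv2 B k j) = (if i = j then 1 else 0)"
proof -
  have neq: "e2 \<noteq> e1" using basis_neq by simp
  have entries: "gram_inv2 B e1 e1 = B e2 e2 / det2 B" "gram_inv2 B e2 e2 = B e1 e1 / det2 B"
      "gram_inv2 B e1 e2 = - B e1 e2 / det2 B" "gram_inv2 B e2 e1 = - B e1 e2 / det2 B"
    unfolding gram_inv2_def using basis_neq by (simp_all add: Basis_eq)
  have sym21: "B e2 e1 = B e1 e2" by (rule sym)
  have "(\<Sum>k\<in>Basis. gram_inv2 B i k * B k j) = (if i = j then 1 else 0)
      \<and> (\<Sum>k\<in>Basis. B i k * gram_inv2 B k j) = (if i = j then 1 else 0)"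
    if "i = e1 \<or> i = e2" "j = e1 \<or> j = e2" for i j
    using that basis_neq neq
    by (elim disjE; simp add: sum_Basis entries sym21 field_simps det; simp add: det2_def algebra_simps)
  then show "\<And>i j. i \<in> Basis \<Longrightarrow> j \<in> Basis \<Longrightarrow> (\<Sum>k\<in>Basis. gram_inv2 B i k * B k j) = (if i = j then 1 else 0)"
    and "\<And>i j. i \<in> Basis \<Longrightarrow> j \<in> Basis \<Longrightarrow> (\<Sum>k\<in>Basis. B i k * gram_inv2 B k j) = (if i = j then 1 else 0)"
    by (simp_all add: Basis_eq)
qed

lemma gram_inv2_symmetric: "gram_inv2 B i j = gram_inv2 B j i"
  unfolding gram_inv2_def by (auto simp: Basis_eq)

lemma gram_inv2_outside: "i \<notin> Basis \<or> j \<notin> Basis \<Longrightarrow> gram_inv2 B i j = 0"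
  unfolding gram_inv2_def by (auto simp: Basis_eq)

lemma gram_inverse_gram_inv2:
  assumes "bilinear B" "\<And>x y. B x y = B y x" "det2 B \<noteq> 0"
  shows "gram_inverse B (gram_inv2 B)"
proof
  show "bilinear B" by fact
  show "gram_inv2 B i j = gram_inv2 B j i" for i j by (rule gram_inv2_symmetric)
  show "(\<Sum>k\<in>Basis. gram_inv2 B i k * B k j) = (if i = j then 1 else 0)" if "i \<in> Basis" "j \<in> Basis" for i j
    using assms(2,3) that by (rule gram_inv2_left_inverse)
qed

lemma lin_trace_basis2: "lin_trace M = M e1 \<bullet> e1 + M e2 \<bullet> e2"
  by (simp add: lin_trace_def sum_Basis)

lemma lin_trace_complex_structure:
  fixes M :: "'a \<Rightarrow> 'a"
  assumes M: "linear M" and MM: "\<And>x. M (M x) = - x"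
  shows "lin_trace M = 0"
proof -
  define a b c d where "a = M e1 \<bullet> e1" "b = M e1 \<bullet> e2" "c = M e2 \<bullet> e1" "d = M e2 \<bullet> e2"
  have Me1: "M e1 = a *\<^sub>R e1 + b *\<^sub>R e2" and Me2: "M e2 = c *\<^sub>R e1 + d *\<^sub>R e2"
    unfolding a_b_c_d_def by (rule basis_expansion)+
  have "- e1 = M (a *\<^sub>R e1 + b *\<^sub>R e2)" by (simp only: MM flip: Me1)
  also have "\<dots> = a *\<^sub>R (a *\<^sub>R e1 + b *\<^sub>R e2) + b *\<^sub>R (c *\<^sub>R e1 + d *\<^sub>R e2)"
    by (simp only: Me1 Me2 linear_add[OF M] linear_scale[OF M])
  finally have eq: "- e1 = (a * a + b * c) *\<^sub>R e1 + (a * b + b * d) *\<^sub>R e2"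
    by (simp add: algebra_simps)
  have "a * a + b * c = - 1" "b * (a + d) = 0"
    using arg_cong[OF eq, of "\<lambda>u. u \<bullet> e1"] arg_cong[OF eq, of "\<lambda>u. u \<bullet> e2"]
    by (simp_all add: inner_add_left algebra_simps)
  moreover have "b \<noteq> 0"
  proof
    assume "b = 0"
    with \<open>a * a + b * c = - 1\<close> have "a * a = - 1" by simp
    then show False using zero_le_square[of a] by linarith
  qed
  ultimately have "a + d = 0" by simp
  then show ?thesis unfolding lin_trace_basis2 a_b_c_d_def[symmetric] .
qed

end

section \<open>Almost Norden charts\<close>

locale norden_chart = basis2 e1 e2
  for e1 e2 :: "'a::euclidean_space" +
  fixes U :: "'a set" and h :: "'a \<Rightarrow> 'a \<Rightarrow> 'a \<Rightarrow> real" and J :: "'a \<Rightarrow> 'a \<Rightarrow> 'a"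
  assumes almost_norden: "almost_norden U h J"
begin

lemma open_U: "open U"
  using almost_norden by (simp add: almost_norden_def)

context
  fixes q assumes q: "q \<in> U"
begin

lemma h_bilinear: "bilinear (h q)"
  and h_symmetric: "h q x y = h q y x"
  and h_nondegenerate: "(\<And>y. h q x y = 0) \<Longrightarrow> x = 0"
  and J_linear: "linear (J q)"
  and J_J [simp]: "J q (J q x) = - x"
  and h_J_J [simp]: "h q (J q x) (J q y) = - h q x y"
  using almost_norden q by (auto simp: almost_norden_def)

lemmas h_simps [simp] =
  bilinear_ladd[OF h_bilinear] bilinear_radd[OF h_bilinear] bilinear_lsub[OF h_bilinear]
  bilinear_rsub[OF h_bilinear] bilinear_lneg[OF h_bilinear] bilinear_rneg[OF h_bilinear]
  bilinear_lmul[OF h_bilinear] bilinear_rmul[OF h_bilinear] bilinear_lzero[OF h_bilinear]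
  bilinear_rzero[OF h_bilinear]

lemmas J_simps [simp] =
  linear_add[OF J_linear] linear_diff[OF J_linear] linear_neg[OF J_linear]
  linear_scale[OF J_linear] linear_0[OF J_linear]

lemma h_J_left: "h q (J q x) y = h q x (J q y)"
  using h_J_J[of x "J q y"] by simp

lemma lin_trace_J: "lin_trace (J q) = 0"
  using J_linear by (rule lin_trace_complex_structure) simp

end

lemma h_smooth: "smooth_fun_on U (\<lambda>p. h p x y)"
  and J_smooth: "smooth_fun_on U (\<lambda>p. J p x \<bullet> y)"
  using almost_norden by (auto simp: almost_norden_def)

abbreviation dh :: "'a \<Rightarrow> 'a \<Rightarrow> 'a \<Rightarrow> 'a \<Rightarrow> real" where
  "dh x y q \<equiv> frechet_derivative (\<lambda>p. h p x y) (at q)"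

abbreviation dJ :: "'a \<Rightarrow> 'a \<Rightarrow> 'a \<Rightarrow> 'a" where
  "dJ z q \<equiv> frechet_derivative (\<lambda>p. J p z) (at q)"

context
  fixes q assumes q: "q \<in> U"
begin

lemma h_differentiable: "(\<lambda>p. h p x y) differentiable (at q)"
  using smooth_fun_on_differentiable[OF h_smooth open_U q] .

lemma h_has_derivative: "((\<lambda>p. h p x y) has_derivative dh x y q) (at q)"
  using h_differentiable frechet_derivative_works by blast

lemma dh_differentiable: "(\<lambda>p. dh x y p v) differentiable (at q)"
  using smooth_fun_on_derivative_differentiable[OF h_smooth open_U q] .

lemma J_has_derivative: "((\<lambda>p. J p z) has_derivative dJ z q) (at q)"
proof -
  have "(\<lambda>p. J p z) differentiable (at q)"
    by (rule differentiable_componentwise)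
      (rule smooth_fun_on_differentiable[OF J_smooth open_U q])
  then show ?thesis using frechet_derivative_works by blast
qed

lemma dh_symmetric: "dh x y q = dh y x q"
  by (rule frechet_derivative_cong_open[OF open_U q], rule h_symmetric)

lemma dh_right_lincomb: "dh x (a *\<^sub>R w + b *\<^sub>R w') q v = a * dh x w q v + b * dh x w' q v"
proof -
  have "((\<lambda>p. a * h p x w + b * h p x w') has_derivative (\<lambda>v. a * dh x w q v + b * dh x w' q v)) (at q)"
    by (intro has_derivative_add has_derivative_mult_right h_has_derivative)
  then have "((\<lambda>p. h p x (a *\<^sub>R w + b *\<^sub>R w')) has_derivative (\<lambda>v. a * dh x w q v + b * dh x w' q v)) (at q)"
    by (rule has_derivative_transform_within_open[OF _ open_U q]) simp
  then show ?thesis by (simp add: frechet_derivative_at[symmetric])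
qed

lemma dh_linear_right: "linear (\<lambda>w. dh x w q v)"
  using dh_right_lincomb[of x 1 _ 1 _ v] dh_right_lincomb[of x _ _ 0 0 v] by (intro linearI) simp_all

lemma dh_linear: "linear (dh x y q)"
  using h_differentiable linear_frechet_derivative by blast

lemma h_J_has_derivative:
  "((\<lambda>p. h p y (J p z)) has_derivative (\<lambda>v. dh y (J q z) q v + h q y (dJ z q v))) (at q)"
proof -
  have "((\<lambda>p. \<Sum>b\<in>Basis. (J p z \<bullet> b) * h p y b) has_derivative
      (\<lambda>v. \<Sum>b\<in>Basis. (J q z \<bullet> b) * dh y b q v + (dJ z q v \<bullet> b) * h q y b)) (at q)"
    by (intro has_derivative_sum has_derivative_mult has_derivative_inner_left
        J_has_derivative h_has_derivative)
  moreover have "(\<Sum>b\<in>Basis. (J p z \<bullet> b) * h p y b) = h p y (J p z)" if "p \<in> U" for p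
    using linear_sum_Basis[of "h p y" "J p z"] h_bilinear[OF that] by (simp add: bilinear_def)
  ultimately have "((\<lambda>p. h p y (J p z)) has_derivative
      (\<lambda>v. \<Sum>b\<in>Basis. (J q z \<bullet> b) * dh y b q v + (dJ z q v \<bullet> b) * h q y b)) (at q)"
    by (rule has_derivative_transform_within_open[OF _ open_U q])
  moreover have "(\<Sum>b\<in>Basis. (J q z \<bullet> b) * dh y b q v + (dJ z q v \<bullet> b) * h q y b)
      = dh y (J q z) q v + h q y (dJ z q v)" for v
    using linear_sum_Basis[OF dh_linear_right, of "J q z" y v]
      linear_sum_Basis[of "h q y" "dJ z q v"] h_bilinear[OF q]
    by (simp add: sum.distrib bilinear_def mult.commute)
  ultimately show ?thesis by simp
qed

end

definition koszul :: "'a \<Rightarrow> 'a \<Rightarrow> 'a \<Rightarrow> 'a \<Rightarrow> real" where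
  "koszul q x y w = (dh y w q x + dh x w q y - dh x y q w) / 2"

context
  fixes q assumes q: "q \<in> U"
begin

lemma koszul_linear: "linear (koszul q x y)"
  using dh_linear_right[OF q] dh_linear[OF q] unfolding koszul_def linear_iff
  by (simp add: add_divide_distrib diff_divide_distrib algebra_simps)

lemma h_det2: "det2 (h q) \<noteq> 0"
  using h_bilinear[OF q] h_symmetric[OF q] h_nondegenerate[OF q] by (rule det2_nonzero)

lemma gram_inverse_h: "gram_inverse (h q) (gram_inv2 (h q))"
  using h_bilinear[OF q] h_symmetric[OF q] h_det2 by (rule gram_inverse_gram_inv2)

lemma koszul_unique:
  assumes "\<And>w. h q v w = koszul q x y w"
  shows "v = dual_vector (gram_inv2 (h q)) (koszul q x y)"
proof -
  have "h q (v - dual_vector (gram_inv2 (h q)) (koszul q x y)) w = 0" for w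
    using assms gram_inverse.dual_vector_represents[OF gram_inverse_h koszul_linear] q by simp
  then show ?thesis using h_nondegenerate[OF q] by fastforce
qed

lemma christ_eq_dual_vector: "christ h q x y = dual_vector (gram_inv2 (h q)) (koszul q x y)"
  unfolding christ_def
proof (rule the_equality)
  show "\<forall>w. h q (dual_vector (gram_inv2 (h q)) (koszul q x y)) w =
      (dh y w q x + dh x w q y - dh x y q w) / 2"
    using gram_inverse.dual_vector_represents[OF gram_inverse_h koszul_linear]
    by (simp add: koszul_def)
  show "v = dual_vector (gram_inv2 (h q)) (koszul q x y)"
    if "\<forall>w. h q v w = (dh y w q x + dh x w q y - dh x y q w) / 2" for v
    using that by (intro koszul_unique) (simp add: koszul_def)
qed

lemma h_christ: "h q (christ h q x y) w = koszul q x y w"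
  using gram_inverse.dual_vector_represents[OF gram_inverse_h koszul_linear]
  by (simp add: christ_eq_dual_vector)

lemma christ_unique: "(\<And>w. h q v w = koszul q x y w) \<Longrightarrow> christ h q x y = v"
  unfolding christ_eq_dual_vector by (rule koszul_unique[symmetric])

lemma christ_symmetric: "christ h q x y = christ h q y x"
  by (rule christ_unique) (simp add: h_christ koszul_def dh_symmetric[OF q, of x y])

lemma christ_zero [simp]: "christ h q 0 y = 0" "christ h q x 0 = 0"
  using q linear_0[OF dh_linear[OF q]]
  by (auto intro!: christ_unique simp: koszul_def frechet_derivative_cong_open[OF open_U q, of "\<lambda>p. h p _ _" "\<lambda>_. 0"])

lemma metric_compatible: "dh y z q x = h q (christ h q x y) z + h q y (christ h q x z)"
  using q by (simp add: h_christ h_symmetric[OF q, of y] koszul_def dh_symmetric[OF q] field_simps)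

end

lemma christ_differentiable:
  assumes q: "q \<in> U"
  shows "(\<lambda>p. christ h p y z) differentiable (at q)"
proof (rule differentiable_transform_open[OF _ open_U q])
  have "(\<lambda>p. gram_inv2 (h p) i j) differentiable (at q)" for i j
  proof -
    have "(\<lambda>p. if i = e1 \<and> j = e1 then h p e2 e2 else if i = e2 \<and> j = e2 then h p e1 e1
        else if i \<in> Basis \<and> j \<in> Basis then - h p e1 e2 else 0) differentiable (at q)"
      by (cases "i = e1 \<and> j = e1"; cases "i = e2 \<and> j = e2"; cases "i \<in> Basis \<and> j \<in> Basis")
        (simp_all (no_asm_simp) add: basis_neq basis_neq[symmetric] h_differentiable[OF q] differentiable_minus)
    then show ?thesis
      using h_det2[OF q] unfolding gram_inv2_def det2_def
      by (intro differentiable_divide differentiable_diff differentiable_mult h_differentiable[OF q]) simp_all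
  qed
  moreover have "(\<lambda>p. koszul p y z j) differentiable (at q)" for j
    unfolding koszul_def by (intro differentiable_diff differentiable_add differentiable_divide
        differentiable_const dh_differentiable[OF q]) simp
  ultimately show "(\<lambda>p. dual_vector (gram_inv2 (h p)) (koszul p y z)) differentiable (at q)"
    unfolding dual_vector_def
    by (intro differentiable_sum differentiable_scaleR differentiable_mult differentiable_const) auto
qed (simp add: christ_eq_dual_vector)

end

section \<open>The S^1-solvable extension of a Kaehler-Norden chart\<close>

lemma has_derivative_snd_compose:
  "(f has_derivative f') (at p) \<Longrightarrow> ((\<lambda>Q. f (snd Q)) has_derivative (\<lambda>V. f' (snd V))) (at (t, p))"
  using has_derivative_compose[OF has_derivative_snd[OF has_derivative_ident], of f f' "(t, p)"] by simp

lemma has_derivative_sin_fst: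
  "((\<lambda>Q::real \<times> 'a::real_normed_vector. sin (2 * fst Q)) has_derivative (\<lambda>V. 2 * fst V * cos (2 * fst P))) (at P)"
  by (rule has_derivative_eq_rhs, rule has_derivative_sin,
      rule has_derivative_mult_right, rule has_derivative_fst[OF has_derivative_ident]) simp

lemma has_derivative_cos_fst:
  "((\<lambda>Q::real \<times> 'a::real_normed_vector. cos (2 * fst Q)) has_derivative (\<lambda>V. - 2 * fst V * sin (2 * fst P))) (at P)"
  by (rule has_derivative_eq_rhs, rule has_derivative_cos,
      rule has_derivative_mult_right, rule has_derivative_fst[OF has_derivative_ident]) (simp add: fun_eq_iff)

locale kaehler_norden_chart = norden_chart +
  assumes kaehler: "kaehler_norden U h J"
begin

abbreviation g :: "real \<times> 'a \<Rightarrow> real \<times> 'a \<Rightarrow> real \<times> 'a \<Rightarrow> real" where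
  "g \<equiv> s1_metric h J"

context
  fixes q assumes q: "q \<in> U"
begin

lemma dJ_kaehler: "dJ z q x = J q (christ h q x z) - christ h q x (J q z)"
proof -
  have "lc_cov h (\<lambda>_. x) (\<lambda>p. J p z) q - J q (lc_cov h (\<lambda>_. x) (\<lambda>_. z) q) = 0"
    using kaehler q unfolding kaehler_norden_def by blast
  then show ?thesis using q unfolding lc_cov_def by (simp add: algebra_simps)
qed

lemma h_has_derivative_christ:
  "((\<lambda>p. h p y w) has_derivative (\<lambda>x. h q (christ h q x y) w + h q y (christ h q x w))) (at q)"
proof -
  have "dh y w q = (\<lambda>x. h q (christ h q x y) w + h q y (christ h q x w))"
    by (rule ext, rule metric_compatible[OF q])
  then show ?thesis using h_has_derivative[OF q, of y w] by simp
qed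

lemma h_J_has_derivative_christ:
  "((\<lambda>p. h p y (J p w)) has_derivative (\<lambda>x. h q (christ h q x y) (J q w) + h q y (J q (christ h q x w)))) (at q)"
  using h_J_has_derivative[OF q] q
  by (simp add: metric_compatible[OF q] dJ_kaehler fun_eq_iff)

lemma h_snd_has_derivative:
  "((\<lambda>Q. h (snd Q) y w) has_derivative
    (\<lambda>V. h q (christ h q (snd V) y) w + h q y (christ h q (snd V) w))) (at (T, q))"
  by (rule has_derivative_snd_compose[where t = T, OF h_has_derivative_christ])

lemma h_J_snd_has_derivative:
  "((\<lambda>Q. h (snd Q) y (J (snd Q) w)) has_derivative
    (\<lambda>V. h q (christ h q (snd V) y) (J q w) + h q y (J q (christ h q (snd V) w)))) (at (T, q))"
  by (rule has_derivative_snd_compose[where t = T, OF h_J_has_derivative_christ])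

lemma s1_metric_has_derivative:
  "((\<lambda>Q. g Q (a, y) (b, w)) has_derivative (\<lambda>V.
     - 2 * fst V * (sin (2 * T) * h q y w + cos (2 * T) * h q y (J q w))
     + cos (2 * T) * (h q (christ h q (snd V) y) w + h q y (christ h q (snd V) w))
     - sin (2 * T) * (h q (christ h q (snd V) y) (J q w) + h q y (J q (christ h q (snd V) w)))))
   (at (T, q))"
  unfolding s1_metric_def fst_conv snd_conv
  by (rule has_derivative_eq_rhs,
      (rule has_derivative_const has_derivative_diff has_derivative_add has_derivative_mult
        has_derivative_sin_fst has_derivative_cos_fst h_snd_has_derivative h_J_snd_has_derivative)+)
    (simp add: fun_eq_iff algebra_simps)

lemma s1_metric_derivative:
  "frechet_derivative (\<lambda>Q. g Q (a, y) (b, w)) (at (T, q)) (s, v) =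
     - 2 * s * (sin (2 * T) * h q y w + cos (2 * T) * h q y (J q w))
     + cos (2 * T) * (h q (christ h q v y) w + h q y (christ h q v w))
     - sin (2 * T) * (h q (christ h q v y) (J q w) + h q y (J q (christ h q v w)))"
  unfolding frechet_derivative_at[OF s1_metric_has_derivative, symmetric] by simp

lemma s1_metric_nondegenerate:
  assumes "\<And>W. g (T, q) V W = 0"
  shows "V = 0"
proof -
  obtain s v where V: "V = (s, v)" by fastforce
  have "s = 0" using assms[of "(1, 0)"] q unfolding V s1_metric_def by simp
  moreover have "v = 0"
  proof (rule h_nondegenerate[OF q])
    fix u
    let ?C = "cos (2 * T)" and ?S = "sin (2 * T)"
    \<comment> \<open>pairing with (0, C u + S J u) returns (C^2 + S^2) h(v,u)\<close>
    have "0 = g (T, q) V (0, ?C *\<^sub>R u + ?S *\<^sub>R J q u)" using assms by simp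
    also have "\<dots> = ?C * (?C * h q v u + ?S * h q v (J q u)) - ?S * (?C * h q v (J q u) - ?S * h q v u)"
      using q unfolding V s1_metric_def by simp
    also have "\<dots> = h q v u * (?C * ?C + ?S * ?S)" by algebra
    also have "\<dots> = h q v u" by (simp only: sin_cos_squared_add3 mult_1_right)
    finally show "h q v u = 0" by simp
  qed
  ultimately show ?thesis using V by (simp add: zero_prod_def)
qed

end

definition s1_christ :: "real \<times> 'a \<Rightarrow> real \<times> 'a \<Rightarrow> real \<times> 'a \<Rightarrow> real \<times> 'a" where
  "s1_christ P X Y =
    (sin (2 * fst P) * h (snd P) (snd X) (snd Y) + cos (2 * fst P) * h (snd P) (snd X) (J (snd P) (snd Y)),
     christ h (snd P) (snd X) (snd Y) - fst X *\<^sub>R J (snd P) (snd Y) - fst Y *\<^sub>R J (snd P) (snd X))"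

lemma christ_s1_metric:
  assumes q: "q \<in> U"
  shows "christ g (T, q) X Y = s1_christ (T, q) X Y"
  unfolding christ_def
proof (rule the_equality)
  obtain a x where X: "X = (a, x)" by fastforce
  obtain b y where Y: "Y = (b, y)" by fastforce
  show koszul_s1: "\<forall>Z. g (T, q) (s1_christ (T, q) X Y) Z =
      (frechet_derivative (\<lambda>Q. g Q Y Z) (at (T, q)) X + frechet_derivative (\<lambda>Q. g Q X Z) (at (T, q)) Y
       - frechet_derivative (\<lambda>Q. g Q X Y) (at (T, q)) Z) / 2"
  proof
    fix Z :: "real \<times> 'a"
    obtain c z where Z: "Z = (c, z)" by fastforce
    have "christ h q y x = christ h q x y" "christ h q z x = christ h q x z"
        "christ h q z y = christ h q y z"
      using christ_symmetric[OF q] by auto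
    moreover have "h q y (christ h q x z) = h q (christ h q x z) y"
        "h q y (J q (christ h q x z)) = h q (christ h q x z) (J q y)"
      using h_symmetric[OF q] h_J_left[OF q] by metis+
    ultimately show "g (T, q) (s1_christ (T, q) X Y) Z =
      (frechet_derivative (\<lambda>Q. g Q Y Z) (at (T, q)) X + frechet_derivative (\<lambda>Q. g Q X Z) (at (T, q)) Y
       - frechet_derivative (\<lambda>Q. g Q X Y) (at (T, q)) Z) / 2"
      unfolding X Y Z s1_metric_derivative[OF q] unfolding s1_christ_def s1_metric_def
      using q by (simp add: h_J_left[OF q] algebra_simps)
  qed
  fix V assume V: "\<forall>Z. g (T, q) V Z =
      (frechet_derivative (\<lambda>Q. g Q Y Z) (at (T, q)) X + frechet_derivative (\<lambda>Q. g Q X Z) (at (T, q)) Y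
       - frechet_derivative (\<lambda>Q. g Q X Y) (at (T, q)) Z) / 2"
  have "g (T, q) (V - s1_christ (T, q) X Y) Z = 0" for Z
    using spec[OF V, of Z] spec[OF koszul_s1, of Z] q
    by (simp add: s1_metric_def algebra_simps)
  then show "V = s1_christ (T, q) X Y"
    using s1_metric_nondegenerate[OF q] by fastforce
qed

abbreviation dchrist :: "'a \<Rightarrow> 'a \<Rightarrow> 'a \<Rightarrow> 'a \<Rightarrow> 'a" where
  "dchrist y z q \<equiv> frechet_derivative (\<lambda>p. christ h p y z) (at q)"

context
  fixes q assumes q: "q \<in> U"
begin

lemma christ_snd_has_derivative:
  "((\<lambda>Q. christ h (snd Q) y z) has_derivative (\<lambda>V. dchrist y z q (snd V))) (at (T, q))"
  by (rule has_derivative_snd_compose[OF iffD1[OF frechet_derivative_works christ_differentiable[OF q]]])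

lemma J_snd_has_derivative:
  "((\<lambda>Q. J (snd Q) z) has_derivative
    (\<lambda>V. J q (christ h q (snd V) z) - christ h q (snd V) (J q z))) (at (T, q))"
  using has_derivative_snd_compose[where t = T, OF J_has_derivative[OF q, of z]]
  by (simp add: dJ_kaehler[OF q])

lemma s1_christ_has_derivative:
  "((\<lambda>Q. christ g Q (b, y) (c, z)) has_derivative (\<lambda>V.
     (2 * fst V * (cos (2 * T) * h q y z - sin (2 * T) * h q y (J q z))
       + sin (2 * T) * (h q (christ h q (snd V) y) z + h q y (christ h q (snd V) z))
       + cos (2 * T) * (h q (christ h q (snd V) y) (J q z) + h q y (J q (christ h q (snd V) z))),
      dchrist y z q (snd V)
       - b *\<^sub>R (J q (christ h q (snd V) z) - christ h q (snd V) (J q z))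
       - c *\<^sub>R (J q (christ h q (snd V) y) - christ h q (snd V) (J q y))))) (at (T, q))"
proof (rule has_derivative_transform_within_open[where f = "\<lambda>Q. s1_christ Q (b, y) (c, z)"])
  show "open (UNIV \<times> U)" using open_U by (simp add: open_Times)
  show "(T, q) \<in> UNIV \<times> U" using q by simp
  show "s1_christ Q (b, y) (c, z) = christ g Q (b, y) (c, z)" if "Q \<in> UNIV \<times> U" for Q
    using that christ_s1_metric[of "snd Q" "fst Q"] by (cases Q) simp
qed (unfold s1_christ_def fst_conv snd_conv,
     rule has_derivative_eq_rhs,
     (rule has_derivative_const has_derivative_Pair has_derivative_diff has_derivative_add
       has_derivative_mult has_derivative_scaleR_right has_derivative_sin_fst has_derivative_cos_fst
       h_snd_has_derivative[OF q] h_J_snd_has_derivative[OF q] christ_snd_has_derivative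
       J_snd_has_derivative)+,
     simp add: fun_eq_iff algebra_simps)

lemma dchrist_zero [simp]: "dchrist 0 z q v = 0" "dchrist y 0 q v = 0" "dchrist y z q 0 = 0"
proof -
  show "dchrist 0 z q v = 0" "dchrist y 0 q v = 0"
    using frechet_derivative_cong_open[OF open_U q, of "\<lambda>p. christ h p 0 z" "\<lambda>_. 0"]
      frechet_derivative_cong_open[OF open_U q, of "\<lambda>p. christ h p y 0" "\<lambda>_. 0"]
    by simp_all
  show "dchrist y z q 0 = 0"
    using linear_0[OF linear_frechet_derivative[OF christ_differentiable[OF q]]] .
qed

lemma s1_christ_derivative:
  "frechet_derivative (\<lambda>Q. christ g Q (b, y) (c, z)) (at (T, q)) (s, v) =
     (2 * s * (cos (2 * T) * h q y z - sin (2 * T) * h q y (J q z))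
       + sin (2 * T) * (h q (christ h q v y) z + h q y (christ h q v z))
       + cos (2 * T) * (h q (christ h q v y) (J q z) + h q y (J q (christ h q v z))),
      dchrist y z q v - b *\<^sub>R (J q (christ h q v z) - christ h q v (J q z))
       - c *\<^sub>R (J q (christ h q v y) - christ h q v (J q y)))"
  unfolding frechet_derivative_at[OF s1_christ_has_derivative, symmetric] by simp

lemma curv_op_s1_tangent:
  "snd (curv_op g (\<lambda>_. (0, c)) (\<lambda>_. (0, a)) (\<lambda>_. (0, b)) (T, q)) =
    curv_op h (\<lambda>_. c) (\<lambda>_. a) (\<lambda>_. b) q
    - (sin (2 * T) * h q a b + cos (2 * T) * h q a (J q b)) *\<^sub>R J q c
    + (sin (2 * T) * h q c b + cos (2 * T) * h q c (J q b)) *\<^sub>R J q a"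
  unfolding curv_op_const_fields christ_s1_metric[OF q] s1_christ_derivative
  unfolding s1_christ_def fst_conv snd_conv
  apply simp
  done

lemma curv_op_s1_xi_tangent:
  "fst (curv_op g (\<lambda>_. (1, 0)) (\<lambda>_. (0, a)) (\<lambda>_. (0, b)) (T, q)) =
    cos (2 * T) * h q a b - sin (2 * T) * h q a (J q b)"
  unfolding curv_op_const_fields christ_s1_metric[OF q] s1_christ_derivative
  unfolding s1_christ_def fst_conv snd_conv
  using q by (simp add: h_J_left)

lemma curv_op_s1_tangent_xi:
  "snd (curv_op g (\<lambda>_. (0, c)) (\<lambda>_. (1, 0)) (\<lambda>_. (1, 0)) (T, q)) = c"
  unfolding curv_op_const_fields christ_s1_metric[OF q] s1_christ_derivative
  unfolding s1_christ_def fst_conv snd_conv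
  using q by simp

lemma curv_op_s1_zero: "curv_op g (\<lambda>_. X) (\<lambda>_. Y) (\<lambda>_. 0) (T, q) = 0"
proof -
  obtain b y where X: "X = (b, y)" by fastforce
  obtain c z where Y: "Y = (c, z)" by fastforce
  show ?thesis
    unfolding X Y zero_prod_def curv_op_const_fields christ_s1_metric[OF q] s1_christ_derivative
    unfolding s1_christ_def fst_conv snd_conv
    using q by (simp add: zero_prod_def)
qed

lemma curv_op_s1_diagonal: "curv_op g (\<lambda>_. X) (\<lambda>_. X) (\<lambda>_. Z) (T, q) = 0"
  unfolding curv_op_const_fields christ_s1_metric[OF q]
  unfolding s1_christ_def using q by (simp add: zero_prod_def)

end

definition gN :: "real \<Rightarrow> 'a \<Rightarrow> 'a \<Rightarrow> 'a \<Rightarrow> real" where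
  "gN T q a b = g (T, q) (0, a) (0, b)"

definition s1_gram_inv :: "real \<Rightarrow> 'a \<Rightarrow> real \<times> 'a \<Rightarrow> real \<times> 'a \<Rightarrow> real" where
  "s1_gram_inv T q I K =
    (if I = (1, 0) \<and> K = (1, 0) then 1
     else if fst I = 0 \<and> fst K = 0 then gram_inv2 (gN T q) (snd I) (snd K) else 0)"

context
  fixes q assumes q: "q \<in> U"
begin

lemma gN_eq: "gN T q a b = cos (2 * T) * h q a b - sin (2 * T) * h q a (J q b)"
  by (simp add: gN_def s1_metric_def)

lemma s1_metric_blocks [simp]:
  "g (T, q) (1, 0) (1, 0) = 1" "g (T, q) (1, 0) (0, b) = 0" "g (T, q) (0, a) (1, 0) = 0"
  "g (T, q) (0, a) (0, b) = gN T q a b"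
  using q by (simp_all add: gN_def s1_metric_def)

lemma gN_symmetric: "gN T q a b = gN T q b a"
  using q by (simp add: gN_eq h_symmetric[OF q, of a] h_J_left[OF q, of b])

lemma gN_bilinear: "bilinear (gN T q)"
  using q unfolding bilinear_def gN_eq by (auto intro!: linearI simp: algebra_simps)

lemmas gN_simps [simp] =
  bilinear_rneg[OF gN_bilinear] bilinear_rmul[OF gN_bilinear] bilinear_radd[OF gN_bilinear]
  bilinear_rsub[OF gN_bilinear]

lemma gN_nondegenerate:
  assumes "\<And>w. gN T q v w = 0"
  shows "v = 0"
proof -
  have "g (T, q) (0, v) W = 0" for W
    using assms[of "snd W"] q by (cases W) (simp add: s1_metric_def gN_def)
  then have "(0::real, v) = 0" by (rule s1_metric_nondegenerate[OF q])
  then show ?thesis by (simp add: zero_prod_def)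
qed

lemma gN_det2: "det2 (gN T q) \<noteq> 0"
  using gN_bilinear gN_symmetric gN_nondegenerate by (rule det2_nonzero)

lemma gram_inverse_gN: "gram_inverse (gN T q) (gram_inv2 (gN T q))"
  using gN_bilinear gN_symmetric gN_det2 by (rule gram_inverse_gram_inv2)

lemma gram_inv_s1_metric: "gram_inv g (T, q) = s1_gram_inv T q"
proof (rule gram_invI)
  note left = gram_inv2_left_inverse[OF gN_symmetric gN_det2]
    and right = gram_inv2_right_inverse[OF gN_symmetric gN_det2]
  fix I K :: "real \<times> 'a"
  show "(\<Sum>k\<in>Basis. s1_gram_inv T q I k * g (T, q) k K) = (if I = K then 1 else 0)"
    and "(\<Sum>k\<in>Basis. g (T, q) I k * s1_gram_inv T q k K) = (if I = K then 1 else 0)"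
    if "I \<in> Basis" "K \<in> Basis"
    using that
    by (auto elim!: Basis_real_prod_cases simp: sum_Basis_real_prod s1_gram_inv_def left right
        split: if_split_asm)
  show "s1_gram_inv T q I K = 0" if "I \<notin> Basis \<or> K \<notin> Basis"
    using that gram_inv2_outside by (cases I, cases K) (auto simp: s1_gram_inv_def Basis_prod_def)
qed

lemma mtrace_s1_metric:
  "mtrace g (T, q) B = B (1, 0) (1, 0) + (\<Sum>a\<in>Basis. \<Sum>b\<in>Basis. gram_inv2 (gN T q) a b * B (0, a) (0, b))"
  by (simp add: mtrace_def gram_inv_s1_metric sum_Basis_real_prod s1_gram_inv_def)

end

end

section \<open>Constant sectional curvature\<close>

locale kaehler_norden_const_curv = kaehler_norden_chart +
  fixes k :: real
  assumes const_curv: "const_sec_curv U h k"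
begin

context
  fixes q assumes q: "q \<in> U"
begin

lemma h_curv_op: "h q (curv_op h (\<lambda>_. c) (\<lambda>_. a) (\<lambda>_. b) q) w = k * (h q a b * h q c w - h q c b * h q a w)"
  using const_curv q unfolding const_sec_curv_def curv_def by blast

lemma curv_s1_tangent:
  "curv g (T, q) (0, c) (0, a) (0, b) (0, d) =
    k * (gN T q a (cos (2 * T) *\<^sub>R b + sin (2 * T) *\<^sub>R J q b) * gN T q c d
       - gN T q c (cos (2 * T) *\<^sub>R b + sin (2 * T) *\<^sub>R J q b) * gN T q a d)
    - (gN T q a (J q b) * gN T q c (J q d) - gN T q c (J q b) * gN T q a (J q d))"
proof -
  have "curv g (T, q) (0, c) (0, a) (0, b) (0, d) =
      cos (2 * T) * h q (snd (curv_op g (\<lambda>_. (0, c)) (\<lambda>_. (0, a)) (\<lambda>_. (0, b)) (T, q))) d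
      - sin (2 * T) * h q (snd (curv_op g (\<lambda>_. (0, c)) (\<lambda>_. (0, a)) (\<lambda>_. (0, b)) (T, q))) (J q d)"
    by (simp add: curv_def s1_metric_def)
  also have "\<dots> = k * (gN T q a (cos (2 * T) *\<^sub>R b + sin (2 * T) *\<^sub>R J q b) * gN T q c d
       - gN T q c (cos (2 * T) *\<^sub>R b + sin (2 * T) *\<^sub>R J q b) * gN T q a d)
    - (gN T q a (J q b) * gN T q c (J q d) - gN T q c (J q b) * gN T q a (J q d))"
    unfolding curv_op_s1_tangent[OF q] gN_eq[OF q] using q
    apply (simp add: h_curv_op h_J_left algebra_simps)
    using sin_cos_squared_add3[of "T * 2"] by algebra
  finally show ?thesis .
qed

lemma curv_s1_xi_tangent: "curv g (T, q) (1, 0) (0, a) (0, b) (1, 0) = gN T q a b"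
  using curv_op_s1_xi_tangent[OF q] q by (simp add: curv_def s1_metric_def gN_eq[OF q])

lemma curv_s1_tangent_xi: "curv g (T, q) (0, c) (1, 0) (1, 0) (0, d) = gN T q c d"
  using curv_op_s1_tangent_xi[OF q] by (simp add: curv_def s1_metric_def gN_eq[OF q])

lemma curv_s1_diagonal: "curv g (T, q) X X Z W = 0"
  using curv_op_s1_diagonal[OF q] q by (simp add: curv_def s1_metric_def)

lemma curv_s1_zero: "curv g (T, q) X Y (0, 0) W = 0" "curv g (T, q) X Y Z (0, 0) = 0"
  using curv_op_s1_zero[OF q] q by (simp_all add: curv_def s1_metric_def zero_prod_def)

lemma ricci_s1_xi: "ricci g (T, q) (1, 0) (1, 0) = 2"
  using gram_inverse.trace[OF gram_inverse_gN[OF q], of T "\<lambda>u. u"]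
  by (simp add: ricci_def mtrace_s1_metric[OF q] curv_s1_diagonal curv_s1_tangent_xi DIM_eq_2)

lemma ricci_s1_tangent:
  "ricci g (T, q) (0, a) (0, b) = k * gN T q a (cos (2 * T) *\<^sub>R b + sin (2 * T) *\<^sub>R J q b)"
proof -
  interpret G: gram_inverse "gN T q" "gram_inv2 (gN T q)" by (rule gram_inverse_gN[OF q])
  have "ricci g (T, q) (0, a) (0, b)
      = gN T q a b + (\<Sum>c\<in>Basis. \<Sum>d\<in>Basis. gram_inv2 (gN T q) c d * curv g (T, q) (0, c) (0, a) (0, b) (0, d))"
    by (simp add: ricci_def mtrace_s1_metric[OF q] curv_s1_xi_tangent)
  also have "\<dots> = gN T q a b
      + k * (gN T q a (cos (2 * T) *\<^sub>R b + sin (2 * T) *\<^sub>R J q b) * lin_trace (\<lambda>u::'a. u)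
             - gN T q a (cos (2 * T) *\<^sub>R b + sin (2 * T) *\<^sub>R J q b))
      - (gN T q a (J q b) * lin_trace (J q) - gN T q a (J q (J q b)))"
    unfolding curv_s1_tangent G.contract_curvature[OF linear_ident J_linear[OF q]] by simp
  also have "\<dots> = k * gN T q a (cos (2 * T) *\<^sub>R b + sin (2 * T) *\<^sub>R J q b)"
    using q by (simp add: DIM_eq_2 lin_trace_J algebra_simps)
  finally show ?thesis .
qed

lemma ricci_star_s1_tangent:
  "ricci_star g (s1_phi J) (T, q) (0, a) (0, J q b)
    = k * gN T q a (cos (2 * T) *\<^sub>R b + sin (2 * T) *\<^sub>R J q b) - gN T q a b"
proof -
  interpret G: gram_inverse "gN T q" "gram_inv2 (gN T q)" by (rule gram_inverse_gN[OF q])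
  have JJ: "linear (\<lambda>u. J q (J q u))"
    using linear_compose[OF J_linear[OF q] J_linear[OF q]] by (simp add: o_def)
  have "ricci_star g (s1_phi J) (T, q) (0, a) (0, J q b)
      = (\<Sum>c\<in>Basis. \<Sum>d\<in>Basis. gram_inv2 (gN T q) c d * curv g (T, q) (0, c) (0, a) (0, J q b) (0, J q d))"
    using q by (simp add: ricci_star_def mtrace_s1_metric[OF q] s1_phi_def curv_s1_zero)
  also have "\<dots> =
      k * (gN T q a (cos (2 * T) *\<^sub>R J q b + sin (2 * T) *\<^sub>R J q (J q b)) * lin_trace (J q)
           - gN T q a (J q (cos (2 * T) *\<^sub>R J q b + sin (2 * T) *\<^sub>R J q (J q b))))
      - (gN T q a (J q (J q b)) * lin_trace (\<lambda>u. J q (J q u)) - gN T q a (J q (J q (J q (J q b)))))"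
    unfolding curv_s1_tangent G.contract_curvature[OF J_linear[OF q] JJ] ..
  also have "\<dots> = k * gN T q a (cos (2 * T) *\<^sub>R b + sin (2 * T) *\<^sub>R J q b) - gN T q a b"
    using q by (simp add: lin_trace_J DIM_eq_2 algebra_simps)
  finally show ?thesis .
qed

lemma scal_s1: "scal g (T, q) = 2 * (k * cos (2 * T) + 1)"
proof -
  interpret G: gram_inverse "gN T q" "gram_inv2 (gN T q)" by (rule gram_inverse_gN[OF q])
  have "ricci g (T, q) (0, a) (0, b) = gN T q a (k *\<^sub>R (cos (2 * T) *\<^sub>R b + sin (2 * T) *\<^sub>R J q b))" for a b
    using ricci_s1_tangent q by simp
  then have "scal g (T, q) = 2 + lin_trace (\<lambda>u. k *\<^sub>R (cos (2 * T) *\<^sub>R u + sin (2 * T) *\<^sub>R J q u))"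
    by (simp only: scal_def mtrace_s1_metric[OF q] ricci_s1_xi G.trace)
  also have "\<dots> = 2 * (k * cos (2 * T) + 1)"
    by (simp add: DIM_eq_2 lin_trace_J[OF q] algebra_simps)
  finally show ?thesis .
qed

lemma tau_ss_s1: "tau_ss g (s1_phi J) (T, q) = 2 * (k * cos (2 * T) - 1)"
proof -
  interpret G: gram_inverse "gN T q" "gram_inv2 (gN T q)" by (rule gram_inverse_gN[OF q])
  have "ricci_star g (s1_phi J) (T, q) (1, 0) (0, 0) = 0"
    by (simp add: ricci_star_def mtrace_s1_metric[OF q] curv_s1_zero)
  then have "tau_ss g (s1_phi J) (T, q)
      = (\<Sum>a\<in>Basis. \<Sum>b\<in>Basis. gram_inv2 (gN T q) a b * ricci_star g (s1_phi J) (T, q) (0, a) (0, J q b))"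
    using q by (simp add: tau_ss_def mtrace_s1_metric[OF q] s1_phi_def)
  moreover have "ricci_star g (s1_phi J) (T, q) (0, a) (0, J q b)
      = gN T q a (k *\<^sub>R (cos (2 * T) *\<^sub>R b + sin (2 * T) *\<^sub>R J q b) - b)" for a b
    using ricci_star_s1_tangent q by simp
  ultimately have "tau_ss g (s1_phi J) (T, q)
      = lin_trace (\<lambda>u. k *\<^sub>R (cos (2 * T) *\<^sub>R u + sin (2 * T) *\<^sub>R J q u) - u)"
    by (simp only: G.trace)
  also have "\<dots> = 2 * (k * cos (2 * T) - 1)"
    by (simp add: DIM_eq_2 lin_trace_J[OF q] algebra_simps)
  finally show ?thesis .
qed

end

end

theorem corollary4p6:
  fixes U :: "'a::euclidean_space set"
    and h :: "'a \<Rightarrow> 'a \<Rightarrow> 'a \<Rightarrow> real"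
    and J :: "'a \<Rightarrow> 'a \<Rightarrow> 'a"
    and k' t :: real and p :: 'a
  assumes "DIM('a) = 2"
    and "almost_norden U h J"
    and "const_sec_curv U h k'"
    and "kaehler_norden U h J"
    and "t > 0" and "p \<in> U"
  shows "scal (s1_metric h J) (t, p) = 2 * (k' * cos (2 * t) + 1)
    \<and> tau_ss (s1_metric h J) (s1_phi J) (t, p) = 2 * (k' * cos (2 * t) - 1)"
proof -
  obtain e1 e2 :: 'a where "Basis = {e1, e2}" "e1 \<noteq> e2"
    using \<open>DIM('a) = 2\<close> card_2_iff by metis
  then interpret kaehler_norden_const_curv e1 e2 U h J k'
    using assms(2-4) by unfold_locales
  show ?thesis using scal_s1 tau_ss_s1 \<open>p \<in> U\<close> by simp
qed

end
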